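(* Let $K$ be a number field of degree $n$ with $r_1$ real embeddings and $2r_2$ non-real complex embeddings, and let $\sigma_1,\dots,\sigma_n$ be its complex embeddings numbered so that $\sigma_i(K)\subset\mathbb{R}$ for $1\leqslant i\leqslant r_1$ and $\sigma_{j+r_2}=\overline{\sigma_j}$ for $r_1+1\leqslant j\leqslant r_1+r_2$. Embed $K$ into $V=\mathbb{R}^{r_1}\times\mathbb{C}^{r_2}$ via $x\mapsto(\sigma_1(x),\dots,\sigma_{r_1+r_2}(x))$, so that every fractional ideal of $O_K$ is a lattice in $V$. Let $\|\ \|$ be a norm on $V$ such that $\|xy\|\leqslant\|x\|\|y\|$ for all $x,y\in V$ (product taken componentwise). Let $k,\ell\in\{1,\dots,n\}$ with $k+\ell\geqslant n+1$, and let $I,J$ be fractional ideals of $O_K$. Then $\lambda_n(IJ)\leqslant\lambda_k(I)\lambda_\ell(J)$.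
   Context: For a lattice $\Gamma$ of the $n$-dimensional real vector space $V$ equipped with the norm $\|\ \|$ and $i\in\{1,\dots,n\}$, the $i$-th Minkowski minimum is $\lambda_i(\Gamma)=\min\{\max(\|e_1\|,\dots,\|e_i\|)\ ;\ (e_1,\dots,e_i)\text{ is a linearly independent family of elements of }\Gamma\}$. *)

theory Defs
  imports "HOL-Analysis.Analysis" "HOL-Computational_Algebra.Polynomial"
begin

(* Number fields are modelled as subfields K of the complex numbers of finite
   dimension n over Q. *)

definition subfield_of_complex :: "complex set \<Rightarrow> bool" where
  "subfield_of_complex K \<longleftrightarrow> 0 \<in> K \<and> 1 \<in> K \<and>
     (\<forall>x\<in>K. \<forall>y\<in>K. x + y \<in> K \<and> x * y \<in> K) \<and>
     (\<forall>x\<in>K. - x \<in> K) \<and> (\<forall>x\<in>K. x \<noteq> 0 \<longrightarrow> inverse x \<in> K)"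

definition rat_degree :: "complex set \<Rightarrow> nat \<Rightarrow> bool" where
  "rat_degree K n \<longleftrightarrow> (\<exists>b :: nat \<Rightarrow> complex. (\<forall>j<n. b j \<in> K) \<and>
     (\<forall>q :: nat \<Rightarrow> rat. (\<Sum>j<n. of_rat (q j) * b j) = 0 \<longrightarrow> (\<forall>j<n. q j = 0)) \<and>
     (\<forall>x\<in>K. \<exists>q :: nat \<Rightarrow> rat. x = (\<Sum>j<n. of_rat (q j) * b j)))"

definition number_field :: "complex set \<Rightarrow> nat \<Rightarrow> bool" where
  "number_field K n \<longleftrightarrow> subfield_of_complex K \<and> rat_degree K n"

definition algebraic_integer :: "complex \<Rightarrow> bool" where
  "algebraic_integer x \<longleftrightarrow> (\<exists>p :: int poly. lead_coeff p = 1 \<and> poly (map_poly of_int p) x = 0)"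

definition ring_of_integers :: "complex set \<Rightarrow> complex set" where
  "ring_of_integers K = {x \<in> K. algebraic_integer x}"

definition fractional_ideal :: "complex set \<Rightarrow> complex set \<Rightarrow> bool" where
  "fractional_ideal K I \<longleftrightarrow> I \<subseteq> K \<and> 0 \<in> I \<and> I \<noteq> {0} \<and>
     (\<forall>x\<in>I. \<forall>y\<in>I. x + y \<in> I) \<and>
     (\<forall>a\<in>ring_of_integers K. \<forall>x\<in>I. a * x \<in> I) \<and>
     (\<exists>d\<in>ring_of_integers K. d \<noteq> 0 \<and> (\<forall>x\<in>I. d * x \<in> ring_of_integers K))"

definition frac_ideal_mult :: "complex set \<Rightarrow> complex set \<Rightarrow> complex set" where
  "frac_ideal_mult I J = {(\<Sum>t<m. a t * b t) | (m::nat) a b. \<forall>t<m. a t \<in> I \<and> b t \<in> J}"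

definition field_embedding :: "complex set \<Rightarrow> (complex \<Rightarrow> complex) \<Rightarrow> bool" where
  "field_embedding K s \<longleftrightarrow> s 1 = 1 \<and>
     (\<forall>x\<in>K. \<forall>y\<in>K. s (x + y) = s x + s y \<and> s (x * y) = s x * s y)"

(* V = R^r1 x C^r2 realised as functions nat \<Rightarrow> complex, coordinates i<r1 real,
   coordinates r1 \<le> i < r1+r2 complex, all others 0 *)
definition Vspace :: "nat \<Rightarrow> nat \<Rightarrow> (nat \<Rightarrow> complex) set" where
  "Vspace r1 r2 = {v. (\<forall>i<r1. v i \<in> \<real>) \<and> (\<forall>i\<ge>r1 + r2. v i = 0)}"

definition is_norm_on :: "(nat \<Rightarrow> complex) set \<Rightarrow> ((nat \<Rightarrow> complex) \<Rightarrow> real) \<Rightarrow> bool" where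
  "is_norm_on V N \<longleftrightarrow>
     (\<forall>v\<in>V. N v \<ge> 0 \<and> (N v = 0 \<longleftrightarrow> v = (\<lambda>_. 0))) \<and>
     (\<forall>v\<in>V. \<forall>c::real. N (\<lambda>t. of_real c * v t) = \<bar>c\<bar> * N v) \<and>
     (\<forall>v\<in>V. \<forall>w\<in>V. N (\<lambda>t. v t + w t) \<le> N v + N w)"

definition canon_embed :: "(nat \<Rightarrow> complex \<Rightarrow> complex) \<Rightarrow> nat \<Rightarrow> nat \<Rightarrow> complex \<Rightarrow> (nat \<Rightarrow> complex)" where
  "canon_embed \<sigma> r1 r2 x = (\<lambda>i. if i < r1 + r2 then \<sigma> i x else 0)"

definition real_lin_indep :: "nat \<Rightarrow> (nat \<Rightarrow> nat \<Rightarrow> complex) \<Rightarrow> bool" where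
  "real_lin_indep i e \<longleftrightarrow> (\<forall>c :: nat \<Rightarrow> real.
     (\<forall>t. (\<Sum>j<i. of_real (c j) * e j t) = 0) \<longrightarrow> (\<forall>j<i. c j = 0))"

(* i-th Minkowski minimum of the lattice \<Gamma> w.r.t. N (the min exists; we write Inf) *)
definition minkowski_min :: "((nat \<Rightarrow> complex) \<Rightarrow> real) \<Rightarrow> (nat \<Rightarrow> complex) set \<Rightarrow> nat \<Rightarrow> real" where
  "minkowski_min N \<Gamma> i = Inf {Max ((\<lambda>j. N (e j)) ` {..<i}) | e.
       (\<forall>j<i. e j \<in> \<Gamma>) \<and> real_lin_indep i e}"

end

theory Submission
  imports Defs "Jordan_Normal_Form.Determinant"
begin

(* Let e_1, ..., e_k and f_1, ..., f_l be R-independent families in the images of I and J.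
   They come from Q-independent x_1, ..., x_k in I and y_1, ..., y_l in J.  Since k + l > n, the
   products x_i y_j span K over Q: otherwise some nonzero Q-linear form phi vanishes on all of
   them, and as (a, u) |-> phi (a u) is a nondegenerate pairing on K, the annihilator of the y_j,
   of dimension n - l < k, would contain a nonzero combination of the x_i.  Hence n of the
   products form a Q-basis g of K inside IJ.  By Dedekind's independence of characters the matrix
   (sigma_i (g_j)) is invertible, so the images of the g_j in V are R-independent, and by
   submultiplicativity each of them has norm at most max ||e_i|| * max ||f_j||. *)

section \<open>Linear algebra and independence of characters\<close>

lemma det_eq_0_iff_right_kernel:
  fixes M :: "nat \<Rightarrow> nat \<Rightarrow> 'a::field"
  shows "Determinant.det (Matrix.mat n n (\<lambda>(i, j). M i j)) = 0 \<longleftrightarrow>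
    (\<exists>v. (\<exists>j<n. v j \<noteq> 0) \<and> (\<forall>i<n. (\<Sum>j<n. M i j * v j) = 0))"
proof -
  let ?A = "Matrix.mat n n (\<lambda>(i, j). M i j)"
  have mult_index: "(?A *\<^sub>v v) $ i = (\<Sum>j<n. M i j * v $ j)" if "i < n" "v \<in> carrier_vec n" for v i
    using that by (simp add: scalar_prod_def atLeast0LessThan)
  show ?thesis
    unfolding det_0_iff_vec_prod_zero_field[of ?A n, simplified]
  proof
    assume "\<exists>v. v \<in> carrier_vec n \<and> v \<noteq> 0\<^sub>v n \<and> ?A *\<^sub>v v = 0\<^sub>v n"
    then obtain v where v: "v \<in> carrier_vec n" "v \<noteq> 0\<^sub>v n" "?A *\<^sub>v v = 0\<^sub>v n" by blast
    have "\<exists>j<n. v $ j \<noteq> 0"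
    proof (rule ccontr)
      assume "\<not> (\<exists>j<n. v $ j \<noteq> 0)"
      then have "v = 0\<^sub>v n" using v(1) by (intro eq_vecI) auto
      then show False using v(2) by simp
    qed
    moreover have "(\<Sum>j<n. M i j * v $ j) = 0" if "i < n" for i
      using arg_cong[OF v(3), of "\<lambda>w. w $ i"] mult_index[OF that v(1)] that by simp
    ultimately show "\<exists>v. (\<exists>j<n. v j \<noteq> 0) \<and> (\<forall>i<n. (\<Sum>j<n. M i j * v j) = 0)" by blast
  next
    assume "\<exists>v. (\<exists>j<n. v j \<noteq> 0) \<and> (\<forall>i<n. (\<Sum>j<n. M i j * v j) = 0)"
    then obtain v where v: "\<exists>j<n. v j \<noteq> 0" "\<forall>i<n. (\<Sum>j<n. M i j * v j) = 0" by blast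
    have "vec n v \<noteq> 0\<^sub>v n" using v(1) by (metis index_vec index_zero_vec(1))
    moreover have "?A *\<^sub>v vec n v = 0\<^sub>v n"
      by (rule eq_vecI) (use v(2) mult_index in auto)
    ultimately show "\<exists>w. w \<in> carrier_vec n \<and> w \<noteq> 0\<^sub>v n \<and> ?A *\<^sub>v w = 0\<^sub>v n"
      using vec_carrier by blast
  qed
qed

lemma square_matrix_right_kernel_iff_left_kernel:
  fixes M :: "nat \<Rightarrow> nat \<Rightarrow> 'a::field"
  shows "(\<exists>v. (\<exists>j<n. v j \<noteq> 0) \<and> (\<forall>i<n. (\<Sum>j<n. M i j * v j) = 0)) \<longleftrightarrow>
    (\<exists>v. (\<exists>i<n. v i \<noteq> 0) \<and> (\<forall>j<n. (\<Sum>i<n. v i * M i j) = 0))"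
proof -
  have "transpose_mat (Matrix.mat n n (\<lambda>(i, j). M i j)) = Matrix.mat n n (\<lambda>(i, j). M j i)"
    by (rule eq_matI) auto
  then have "Determinant.det (Matrix.mat n n (\<lambda>(i, j). M i j)) =
      Determinant.det (Matrix.mat n n (\<lambda>(i, j). M j i))"
    by (metis det_transpose mat_carrier)
  moreover have "(\<exists>v. (\<exists>i<n. v i \<noteq> 0) \<and> (\<forall>j<n. (\<Sum>i<n. v i * M i j) = 0)) \<longleftrightarrow>
      Determinant.det (Matrix.mat n n (\<lambda>(i, j). M j i)) = 0"
    unfolding det_eq_0_iff_right_kernel by (simp add: mult.commute)
  ultimately show ?thesis
    unfolding det_eq_0_iff_right_kernel[symmetric] by simp
qed

lemma underdetermined_system_nontrivial_solution:
  fixes A :: "nat \<Rightarrow> nat \<Rightarrow> 'a::field"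
  assumes "m < n"
  shows "\<exists>v. (\<exists>j<n. v j \<noteq> 0) \<and> (\<forall>i<m. (\<Sum>j<n. A i j * v j) = 0)"
proof -
  define M where "M i j = (if i < m then A i j else 0)" for i j
  text \<open>Padded with zero rows to a square matrix, \<open>A\<close> has the last unit vector in its left kernel.\<close>
  have "\<exists>w. (\<exists>i<n. w i \<noteq> 0) \<and> (\<forall>j<n. (\<Sum>i<n. w i * M i j) = 0)"
    using assms by (intro exI[of _ "\<lambda>i. if i = n - 1 then 1 else 0"]) (auto simp: M_def intro!: sum.neutral)
  then obtain v where v: "\<exists>j<n. v j \<noteq> 0" "\<forall>i<n. (\<Sum>j<n. M i j * v j) = 0"
    using square_matrix_right_kernel_iff_left_kernel[of n M] by blast
  moreover have "(\<Sum>j<n. A i j * v j) = 0" if "i < m" for i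
    using v(2)[rule_format, of i] that assms by (simp add: M_def)
  ultimately show ?thesis by blast
qed

lemma characters_linearly_independent:
  fixes \<sigma> :: "'i \<Rightarrow> 'a::monoid_mult \<Rightarrow> 'b::field"
  assumes "finite S" and M: "1 \<in> M" "\<And>x y. x \<in> M \<Longrightarrow> y \<in> M \<Longrightarrow> x * y \<in> M"
    and hom: "\<And>i x y. i \<in> S \<Longrightarrow> x \<in> M \<Longrightarrow> y \<in> M \<Longrightarrow> \<sigma> i (x * y) = \<sigma> i x * \<sigma> i y"
    and one: "\<And>i. i \<in> S \<Longrightarrow> \<sigma> i 1 = 1"
    and distinct: "\<And>i j. i \<in> S \<Longrightarrow> j \<in> S \<Longrightarrow> i \<noteq> j \<Longrightarrow> \<exists>x\<in>M. \<sigma> i x \<noteq> \<sigma> j x"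
    and rel: "\<And>x. x \<in> M \<Longrightarrow> (\<Sum>i\<in>S. c i * \<sigma> i x) = 0"
    and i: "i \<in> S"
  shows "c i = 0"
  using assms(1) hom one distinct rel i
proof (induction S arbitrary: c i rule: finite_induct)
  case empty
  then show ?case by simp
next
  case (insert i0 S)
  text \<open>Comparing the relation at \<open>y * x\<close> with \<open>\<sigma> i0 y\<close> times the relation at \<open>x\<close>
    eliminates \<open>i0\<close>.\<close>
  have c_S: "c i1 = 0" if i1: "i1 \<in> S" for i1
  proof -
    obtain y where y: "y \<in> M" "\<sigma> i0 y \<noteq> \<sigma> i1 y"
      using insert.prems(3)[of i0 i1] i1 insert.hyps(2) by auto
    define d where "d i = c i * (\<sigma> i y - \<sigma> i0 y)" for i
    have rel_d: "(\<Sum>i\<in>S. d i * \<sigma> i x) = 0" if x: "x \<in> M" for x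
    proof -
      have "(\<Sum>i\<in>S. d i * \<sigma> i x) = (\<Sum>i\<in>insert i0 S. d i * \<sigma> i x)"
        using insert.hyps by (simp add: d_def)
      also have "\<dots> = (\<Sum>i\<in>insert i0 S. c i * (\<sigma> i y * \<sigma> i x) - \<sigma> i0 y * (c i * \<sigma> i x))"
        by (rule sum.cong) (simp_all add: d_def algebra_simps)
      also have "\<dots> = (\<Sum>i\<in>insert i0 S. c i * (\<sigma> i y * \<sigma> i x)) -
          \<sigma> i0 y * (\<Sum>i\<in>insert i0 S. c i * \<sigma> i x)"
        by (simp add: sum_subtractf sum_distrib_left)
      also have "(\<Sum>i\<in>insert i0 S. c i * (\<sigma> i y * \<sigma> i x)) =
          (\<Sum>i\<in>insert i0 S. c i * \<sigma> i (y * x))"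
        using insert.prems(1) x y(1) by (intro sum.cong) auto
      finally show ?thesis using insert.prems(4) x y(1) M(2) by simp
    qed
    have "d i1 = 0"
      by (rule insert.IH[of d i1]) (use insert.prems(1-3) rel_d i1 in auto)
    then show ?thesis using y(2) by (simp add: d_def)
  qed
  have "(\<Sum>i\<in>S. c i * \<sigma> i 1) = 0"
    by (rule sum.neutral) (simp add: c_S)
  then have "c i0 * \<sigma> i0 1 = 0"
    using insert.prems(4)[OF M(1)] insert.hyps by simp
  then have "c i0 = 0" using insert.prems(2)[of i0] by simp
  then show ?case using c_S insert.prems(5) by auto
qed

section \<open>Algebraic integers\<close>

lemma algebraic_integer_iff_algebraic_int: "algebraic_integer x \<longleftrightarrow> algebraic_int x"
  unfolding algebraic_integer_def algebraic_int_altdef_ipoly by (simp only: conj_commute)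

text \<open>For \<open>p = c X ^ m + \<dots>\<close> this is the monic polynomial \<open>c ^ (m - 1) * p (X / c)\<close>, whose
  roots are those of \<open>p\<close> multiplied by \<open>c\<close>.\<close>
definition monic_scaling :: "int poly \<Rightarrow> int poly" where
  "monic_scaling p = monom 1 (degree p) +
     (\<Sum>i<degree p. monom (coeff p i * lead_coeff p ^ (degree p - 1 - i)) i)"

lemma lead_coeff_monic_scaling:
  assumes "degree p > 0"
  shows "lead_coeff (monic_scaling p) = 1"
proof -
  let ?low = "\<Sum>i<degree p. monom (coeff p i * lead_coeff p ^ (degree p - 1 - i)) i"
  have "degree ?low \<le> degree p - 1"
    by (rule degree_sum_le) (auto intro: order.trans[OF degree_monom_le])
  then have "degree ?low < degree p" using assms by simp
  then have "lead_coeff (?low + monom 1 (degree p)) = 1"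
    by (subst lead_coeff_add_le) (simp_all add: degree_monom_eq)
  then show ?thesis by (simp add: monic_scaling_def add.commute)
qed

lemma poly_monic_scaling:
  fixes x :: "'a::field_char_0"
  assumes "degree p > 0"
  shows "poly (map_poly of_int (monic_scaling p)) (of_int (lead_coeff p) * x) =
    of_int (lead_coeff p) ^ (degree p - 1) * poly (map_poly of_int p) x"
proof -
  define m where "m = degree p"
  define c where "c = lead_coeff p"
  have "m > 0" using assms by (simp add: m_def)
  have map_q: "map_poly (of_int :: int \<Rightarrow> 'a) (monic_scaling p) =
      monom 1 m + (\<Sum>i<m. monom (of_int (coeff p i * c ^ (m - 1 - i))) i)"
    by (rule poly_eqI) (simp add: monic_scaling_def m_def c_def coeff_map_poly coeff_sum coeff_monom)
  have "coeff p m = c" by (simp add: c_def m_def)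
  have "(of_int c * x) ^ m = of_int c ^ (m - 1) * of_int c * x ^ m"
    using power_minus_mult[OF \<open>m > 0\<close>, of "of_int c :: 'a"] by (simp add: power_mult_distrib)
  then have lead: "(of_int c * x) ^ m = of_int c ^ (m - 1) * (of_int (coeff p m) * x ^ m)"
    by (simp add: \<open>coeff p m = c\<close> mult.assoc)
  have low: "of_int (coeff p i * c ^ (m - 1 - i)) * (of_int c * x) ^ i =
      of_int c ^ (m - 1) * (of_int (coeff p i) * x ^ i)" if "i < m" for i
  proof -
    have "(of_int c :: 'a) ^ (m - 1 - i) * of_int c ^ i = of_int c ^ (m - 1)"
      using that by (simp add: power_add[symmetric])
    then show ?thesis by (simp add: power_mult_distrib algebra_simps)
  qed
  have "poly (map_poly of_int (monic_scaling p)) (of_int c * x) =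
      (of_int c * x) ^ m + (\<Sum>i<m. of_int (coeff p i * c ^ (m - 1 - i)) * (of_int c * x) ^ i)"
    unfolding map_q by (simp only: poly_add poly_sum poly_monom of_int_1 mult_1)
  also have "(\<Sum>i<m. of_int (coeff p i * c ^ (m - 1 - i)) * (of_int c * x) ^ i) =
      (\<Sum>i<m. of_int c ^ (m - 1) * (of_int (coeff p i) * x ^ i))"
    by (intro sum.cong refl low) simp
  also have "(of_int c * x) ^ m + (\<Sum>i<m. of_int c ^ (m - 1) * (of_int (coeff p i) * x ^ i)) =
      of_int c ^ (m - 1) * (\<Sum>i\<le>m. of_int (coeff p i) * x ^ i)"
    unfolding lead sum_distrib_left[symmetric] distrib_left[symmetric]
    by (subst lessThan_Suc_atMost[symmetric]) (simp add: add.commute)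
  also have "(\<Sum>i\<le>m. of_int (coeff p i) * x ^ i) = poly (map_poly of_int p) x"
    by (simp add: poly_altdef degree_map_poly coeff_map_poly m_def)
  finally show ?thesis by (simp add: c_def m_def)
qed

lemma algebraic_imp_int_multiple_algebraic_int:
  fixes x :: "'a::field_char_0"
  assumes "algebraic x"
  obtains d :: int where "d \<noteq> 0" "algebraic_int (of_int d * x)"
proof -
  obtain p :: "int poly" where p: "p \<noteq> 0" "poly (map_poly of_int p) x = 0"
    using algebraicE'[OF assms] by blast
  have "degree p > 0"
  proof (rule ccontr)
    assume "\<not> degree p > 0"
    moreover have "(\<Sum>i\<le>degree p. of_int (coeff p i) * x ^ i) = 0"
      using p(2) by (simp add: poly_altdef degree_map_poly coeff_map_poly)
    ultimately show False using p(1) leading_coeff_0_iff[of p] by simp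
  qed
  then have "lead_coeff (monic_scaling p) = 1"
    and "poly (map_poly of_int (monic_scaling p)) (of_int (lead_coeff p) * x) = 0"
    using lead_coeff_monic_scaling poly_monic_scaling[of p x] p(2) by simp_all
  then have "algebraic_int (of_int (lead_coeff p) * x)"
    unfolding algebraic_int_altdef_ipoly by blast
  moreover have "lead_coeff p \<noteq> 0" using p(1) by simp
  ultimately show ?thesis using that by blast
qed

section \<open>Subfields of \<open>\<complex>\<close> as vector spaces over \<open>\<rat>\<close>\<close>

definition rat_scale :: "rat \<Rightarrow> complex \<Rightarrow> complex" where
  "rat_scale q z = of_rat q * z"

global_interpretation Q: vector_space rat_scale
  by unfold_locales (auto simp: rat_scale_def algebra_simps of_rat_add of_rat_mult)

definition rat_linear_on :: "complex set \<Rightarrow> (complex \<Rightarrow> 'a::field_char_0) \<Rightarrow> bool" where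
  "rat_linear_on K f \<longleftrightarrow>
     (\<forall>x\<in>K. \<forall>y\<in>K. f (x + y) = f x + f y) \<and> (\<forall>q. \<forall>x\<in>K. f (rat_scale q x) = of_rat q * f x)"

lemma rat_linear_on_add: "rat_linear_on K f \<Longrightarrow> x \<in> K \<Longrightarrow> y \<in> K \<Longrightarrow> f (x + y) = f x + f y"
  and rat_linear_on_scale: "rat_linear_on K f \<Longrightarrow> x \<in> K \<Longrightarrow> f (rat_scale q x) = of_rat q * f x"
  unfolding rat_linear_on_def by auto

lemma rat_linear_on_lincomb:
  assumes "\<And>i. i \<in> A \<Longrightarrow> rat_linear_on K (f i)"
  shows "rat_linear_on K (\<lambda>x. \<Sum>i\<in>A. c i * f i x)"
  using assms unfolding rat_linear_on_def
  by (simp add: distrib_left sum.distrib sum_distrib_left mult.left_commute)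

definition rat_independent :: "nat \<Rightarrow> (nat \<Rightarrow> complex) \<Rightarrow> bool" where
  "rat_independent m x \<longleftrightarrow>
     (\<forall>q :: nat \<Rightarrow> rat. (\<Sum>j<m. of_rat (q j) * x j) = 0 \<longrightarrow> (\<forall>j<m. q j = 0))"

lemma rat_independent_inj_on:
  assumes "rat_independent m x"
  shows "inj_on x {..<m}"
proof (rule inj_onI, rule ccontr)
  fix i j assume ij: "i \<in> {..<m}" "j \<in> {..<m}" "x i = x j" "i \<noteq> j"
  define q where "q = (\<lambda>t. if t = i then (1::rat) else if t = j then -1 else 0)"
  have "(\<Sum>t<m. of_rat (q t) * x t) = (\<Sum>t\<in>{i, j}. of_rat (q t) * x t)"
    by (rule sum.mono_neutral_right) (use ij in \<open>auto simp: q_def\<close>)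
  also have "\<dots> = 0" using ij by (simp add: q_def)
  finally have "q i = 0" using assms ij unfolding rat_independent_def by blast
  then show False by (simp add: q_def)
qed

lemma card_image_rat_independent: "rat_independent m x \<Longrightarrow> card (x ` {..<m}) = m"
  by (simp add: card_image rat_independent_inj_on)

lemma rat_independent_imp_independent:
  assumes "rat_independent m x"
  shows "Q.independent (x ` {..<m})"
proof
  assume "Q.dependent (x ` {..<m})"
  then obtain u where u: "\<exists>v\<in>x ` {..<m}. u v \<noteq> 0" "(\<Sum>v\<in>x ` {..<m}. rat_scale (u v) v) = 0"
    using Q.dependent_finite by auto
  have "(\<Sum>t<m. of_rat (u (x t)) * x t) = (\<Sum>v\<in>x ` {..<m}. rat_scale (u v) v)"
    using sum.reindex[OF rat_independent_inj_on[OF assms], of "\<lambda>v. rat_scale (u v) v"]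
    by (simp add: rat_scale_def)
  then have "\<forall>t<m. u (x t) = 0" using u(2) assms unfolding rat_independent_def by metis
  then show False using u(1) by auto
qed

lemma of_real_of_rat: "(of_real (of_rat q) :: 'a::real_field) = of_rat q"
  by (cases q rule: Rat_cases) (simp add: of_rat_rat)

lemma mult_mem_frac_ideal_mult: "x \<in> I \<Longrightarrow> y \<in> J \<Longrightarrow> x * y \<in> frac_ideal_mult I J"
  unfolding frac_ideal_mult_def mem_Collect_eq
  by (rule exI[of _ "1::nat"], rule exI[of _ "\<lambda>_. x"], rule exI[of _ "\<lambda>_. y"]) simp

locale complex_subfield =
  fixes K :: "complex set"
  assumes subfield: "subfield_of_complex K"
begin

lemma zero_mem [simp]: "0 \<in> K"
  and one_mem [simp]: "1 \<in> K"
  and add_mem: "x \<in> K \<Longrightarrow> y \<in> K \<Longrightarrow> x + y \<in> K"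
  and mult_mem: "x \<in> K \<Longrightarrow> y \<in> K \<Longrightarrow> x * y \<in> K"
  and uminus_mem: "x \<in> K \<Longrightarrow> - x \<in> K"
  using subfield unfolding subfield_of_complex_def by auto

lemma inverse_mem: "x \<in> K \<Longrightarrow> inverse x \<in> K"
  using subfield unfolding subfield_of_complex_def by (cases "x = 0") auto

lemma diff_mem: "x \<in> K \<Longrightarrow> y \<in> K \<Longrightarrow> x - y \<in> K"
  using add_mem uminus_mem by (metis diff_conv_add_uminus)

lemma sum_mem: "(\<And>j. j \<in> A \<Longrightarrow> f j \<in> K) \<Longrightarrow> sum f A \<in> K"
  by (induction A rule: infinite_finite_induct) (auto intro: add_mem)

lemma power_mem: "x \<in> K \<Longrightarrow> x ^ m \<in> K"
  by (induction m) (auto intro: mult_mem)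

lemma of_int_mem: "of_int z \<in> K"
  by (induction z rule: int_induct[where k = 0]) (auto intro: add_mem diff_mem)

lemma of_rat_mem: "of_rat q \<in> K"
proof -
  obtain a b where "q = Rat.Fract a b" "b > 0" by (cases q rule: Rat_cases)
  then have "of_rat q = of_int a * inverse (of_int b :: complex)"
    by (simp add: of_rat_rat divide_inverse)
  then show ?thesis by (simp add: mult_mem inverse_mem of_int_mem)
qed

lemma rat_scale_mem: "x \<in> K \<Longrightarrow> rat_scale q x \<in> K"
  unfolding rat_scale_def by (rule mult_mem[OF of_rat_mem])

lemma frac_ideal_mult_subset:
  assumes "I \<subseteq> K" "J \<subseteq> K"
  shows "frac_ideal_mult I J \<subseteq> K"
  using assms unfolding frac_ideal_mult_def by (auto intro!: sum_mem mult_mem)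

lemma rat_linear_on_0:
  assumes "rat_linear_on K f"
  shows "f 0 = 0"
  using rat_linear_on_add[OF assms zero_mem zero_mem] by simp

lemma rat_linear_on_sum:
  assumes "rat_linear_on K f" "\<And>j. j \<in> A \<Longrightarrow> g j \<in> K"
  shows "f (sum g A) = (\<Sum>j\<in>A. f (g j))"
  using assms(2)
  by (induction A rule: infinite_finite_induct)
     (auto simp: rat_linear_on_0[OF assms(1)] rat_linear_on_add[OF assms(1)] sum_mem)

lemma rat_linear_on_mult:
  assumes "rat_linear_on K f" "a \<in> K"
  shows "rat_linear_on K (\<lambda>x. f (a * x))"
  using assms unfolding rat_linear_on_def rat_scale_def
  by (simp add: distrib_left mult_mem mult.left_commute[of a])

lemma rat_linear_on_eq_0_on_span:
  assumes f: "rat_linear_on K f" and "S \<subseteq> K" "\<And>s. s \<in> S \<Longrightarrow> f s = 0" "z \<in> Q.span S"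
  shows "f z = 0"
proof -
  have "Q.subspace {x \<in> K. f x = 0}"
    unfolding Q.subspace_def
    by (simp add: rat_linear_on_0[OF f] rat_linear_on_add[OF f] rat_linear_on_scale[OF f]
        add_mem rat_scale_mem)
  then have "Q.span S \<subseteq> {x \<in> K. f x = 0}"
    using assms(2,3) by (intro Q.span_minimal) auto
  then show ?thesis using assms(4) by blast
qed

lemma rat_linear_on_eq_0_of_mult:
  assumes f: "rat_linear_on K f" and a: "a \<in> K" "a \<noteq> 0"
    and F: "F \<subseteq> K" "K \<subseteq> Q.span F" "\<And>u. u \<in> F \<Longrightarrow> f (a * u) = 0" and z: "z \<in> K"
  shows "f z = 0"
proof -
  have "inverse a * z \<in> Q.span F" using a z F(2) by (auto simp: mult_mem inverse_mem)
  then have "f (a * (inverse a * z)) = 0"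
    using F(3) by (rule rat_linear_on_eq_0_on_span[OF rat_linear_on_mult[OF f a(1)] F(1), rotated])
  then show ?thesis using a(2) by (simp add: mult.assoc[symmetric])
qed

lemma separating_rat_functional:
  assumes "S \<subseteq> K" "z \<in> K" "z \<notin> Q.span S"
  shows "\<exists>\<phi> :: complex \<Rightarrow> rat. rat_linear_on K \<phi> \<and> (\<forall>s\<in>S. \<phi> s = 0) \<and> \<phi> z = 1"
proof -
  obtain C where C: "C \<subseteq> S" "Q.independent C" "S \<subseteq> Q.span C"
    using Q.maximal_independent_subset[of S] by blast
  have "z \<notin> Q.span C" using assms(3) Q.span_mono[OF C(1)] by blast
  then have "Q.independent (insert z C)" using C(2) by (rule Q.independent_insertI)
  then obtain D where D: "insert z C \<subseteq> D" "D \<subseteq> K" "Q.independent D" "K \<subseteq> Q.span D"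
    using Q.maximal_independent_subset_extend[of "insert z C" K] assms(1,2) C(1) by blast
  define \<phi> where "\<phi> v = Q.representation D v z" for v
  have lin: "rat_linear_on K \<phi>"
    unfolding rat_linear_on_def \<phi>_def
    using D(4) by (auto simp: Q.representation_add[OF D(3)] Q.representation_scale[OF D(3)] subsetD)
  have \<phi>_C: "\<phi> c = 0" if "c \<in> C" for c
  proof -
    have "c \<in> D" "z \<noteq> c" using that D(1) Q.span_base[of c C] \<open>z \<notin> Q.span C\<close> by blast+
    have rep: "Q.representation D c = (\<lambda>v. if v = c then 1 else 0)"
      by (rule Q.representation_basis[OF D(3) \<open>c \<in> D\<close>])
    show ?thesis unfolding \<phi>_def rep using \<open>z \<noteq> c\<close> by simp
  qed
  have "\<phi> s = 0" if "s \<in> S" for s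
    by (rule rat_linear_on_eq_0_on_span[OF lin, of C]) (use \<phi>_C that C(1,3) assms(1) in auto)
  moreover have "\<phi> z = 1"
  proof -
    have rep: "Q.representation D z = (\<lambda>v. if v = z then 1 else 0)"
      using D(1) by (intro Q.representation_basis[OF D(3)]) blast
    show ?thesis unfolding \<phi>_def rep by simp
  qed
  ultimately show ?thesis using lin by blast
qed

lemma exists_mult_annihilator:
  fixes \<phi> :: "complex \<Rightarrow> rat"
  assumes \<phi>: "rat_linear_on K \<phi>" and x: "\<forall>j<k. x j \<in> K" "rat_independent k x"
    and G: "finite G" "G \<subseteq> K" "card G < k"
  shows "\<exists>a\<in>K. a \<noteq> 0 \<and> (\<forall>u\<in>G. \<phi> (a * u) = 0) \<and>
    (\<forall>u\<in>K. (\<forall>j<k. \<phi> (x j * u) = 0) \<longrightarrow> \<phi> (a * u) = 0)"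
proof -
  obtain w where w: "bij_betw w {0..<card G} G"
    using ex_bij_betw_nat_finite[OF G(1)] by blast
  obtain v where v: "\<exists>j<k. v j \<noteq> 0" "\<forall>i<card G. (\<Sum>j<k. \<phi> (x j * w i) * v j) = 0"
    using underdetermined_system_nontrivial_solution[OF G(3), of "\<lambda>i j. \<phi> (x j * w i)"] by blast
  define a where "a = (\<Sum>j<k. rat_scale (v j) (x j))"
  have a: "a \<in> K" unfolding a_def using x(1) by (auto intro: sum_mem rat_scale_mem)
  have "a \<noteq> 0"
  proof
    assume "a = 0"
    then have "\<forall>j<k. v j = 0"
      using spec[OF x(2)[unfolded rat_independent_def], of v] unfolding a_def rat_scale_def by simp
    then show False using v(1) by blast
  qed
  have \<phi>_a: "\<phi> (a * u) = (\<Sum>j<k. \<phi> (x j * u) * v j)" if u: "u \<in> K" for u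
  proof -
    have "a * u = (\<Sum>j<k. rat_scale (v j) (x j * u))"
      unfolding a_def rat_scale_def by (simp add: sum_distrib_right mult.assoc)
    then have "\<phi> (a * u) = (\<Sum>j<k. \<phi> (rat_scale (v j) (x j * u)))"
      by (simp only:) (rule rat_linear_on_sum[OF \<phi>], use x(1) u in \<open>auto intro: rat_scale_mem mult_mem\<close>)
    also have "\<dots> = (\<Sum>j<k. \<phi> (x j * u) * v j)"
      using x(1) u by (intro sum.cong refl) (simp add: rat_linear_on_scale[OF \<phi>] mult_mem mult.commute)
    finally show ?thesis .
  qed
  have "\<phi> (a * u) = 0" if "u \<in> G" for u
  proof -
    have "u \<in> K" using G(2) that by blast
    have "u \<in> w ` {0..<card G}" using w that unfolding bij_betw_def by blast
    then obtain i where "i < card G" "u = w i" by auto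
    then show ?thesis unfolding \<phi>_a[OF \<open>u \<in> K\<close>] using v(2) by simp
  qed
  moreover have "\<phi> (a * u) = 0" if "u \<in> K" "\<forall>j<k. \<phi> (x j * u) = 0" for u
    unfolding \<phi>_a[OF that(1)] by (rule sum.neutral) (simp add: that(2))
  ultimately show ?thesis using a \<open>a \<noteq> 0\<close> by blast
qed

lemma embedding_0:
  assumes "field_embedding K s"
  shows "s 0 = 0"
  using assms unfolding field_embedding_def by (metis add_0 add_cancel_left_right zero_mem)

lemma embedding_of_int:
  assumes s: "field_embedding K s"
  shows "s (of_int z) = of_int z"
proof (induction z rule: int_induct[where k = 0])
  case base
  then show ?case using embedding_0[OF s] by simp
next
  case (step1 i)
  have "s (of_int i + 1) = s (of_int i) + s 1"
    using s of_int_mem unfolding field_embedding_def by simp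
  then show ?case using step1 s unfolding field_embedding_def by simp
next
  case (step2 i)
  have "s (of_int (i - 1) + 1) = s (of_int (i - 1)) + s 1"
    using s of_int_mem unfolding field_embedding_def by (metis one_mem)
  then have "s (of_int i) = s (of_int (i - 1)) + 1"
    using s unfolding field_embedding_def by simp
  then show ?case using step2 by (simp add: eq_diff_eq)
qed

lemma embedding_of_rat:
  assumes s: "field_embedding K s"
  shows "s (of_rat q) = of_rat q"
proof -
  obtain a b where q: "q = Rat.Fract a b" "b > 0" by (cases q rule: Rat_cases)
  then have "of_rat q * of_int b = (of_int a :: complex)"
    by (simp add: of_rat_rat)
  then have "s (of_rat q) * of_int b = of_int a"
    using s of_rat_mem of_int_mem unfolding field_embedding_def
    by (metis embedding_of_int[OF s])
  then show ?thesis using q by (simp add: of_rat_rat field_simps)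
qed

lemma embedding_rat_linear:
  assumes "field_embedding K s"
  shows "rat_linear_on K s"
  using assms of_rat_mem unfolding rat_linear_on_def rat_scale_def field_embedding_def
  by (simp add: embedding_of_rat[OF assms])

end

section \<open>Number fields\<close>

locale num_field =
  fixes K :: "complex set" and n :: nat
  assumes number_field: "number_field K n"

sublocale num_field \<subseteq> complex_subfield
  using number_field unfolding number_field_def by unfold_locales blast

context num_field
begin

lemma rat_basis:
  obtains b where "\<forall>j<n. b j \<in> K" "rat_independent n b" "K \<subseteq> Q.span (b ` {..<n})"
proof -
  have "rat_degree K n" using number_field unfolding number_field_def by blast
  then obtain b where b: "(\<forall>j<n. b j \<in> K) \<and> rat_independent n b \<and>
      (\<forall>x\<in>K. \<exists>q. x = (\<Sum>j<n. rat_scale (q j) (b j)))"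
    unfolding rat_degree_def rat_independent_def rat_scale_def by (elim exE)
  have span: "K \<subseteq> Q.span (b ` {..<n})"
  proof
    fix x assume "x \<in> K"
    then obtain q where x: "x = (\<Sum>j<n. rat_scale (q j) (b j))" using b by blast
    show "x \<in> Q.span (b ` {..<n})"
      unfolding x by (intro Q.span_sum Q.span_scale Q.span_base) auto
  qed
  show ?thesis by (rule that) (use b span in auto)
qed

lemma independent_card_le:
  assumes "T \<subseteq> K" "Q.independent T"
  shows "finite T \<and> card T \<le> n"
proof -
  obtain b where b: "\<forall>j<n. b j \<in> K" "rat_independent n b" "K \<subseteq> Q.span (b ` {..<n})"
    by (rule rat_basis)
  have "finite T \<and> card T \<le> card (b ` {..<n})"
    using Q.independent_span_bound[OF finite_imageI[OF finite_lessThan] assms(2)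
        order_trans[OF assms(1) b(3)]] .
  then show ?thesis using card_image_rat_independent[OF b(2)] by simp
qed

lemma spanning_card_ge:
  assumes "finite T" "K \<subseteq> Q.span T"
  shows "n \<le> card T"
proof -
  obtain b where b: "\<forall>j<n. b j \<in> K" "rat_independent n b" "K \<subseteq> Q.span (b ` {..<n})"
    by (rule rat_basis)
  then have "b ` {..<n} \<subseteq> Q.span T" using assms(2) by auto
  then show ?thesis
    using Q.independent_span_bound[OF assms(1) rat_independent_imp_independent[OF b(2)]]
      card_image_rat_independent[OF b(2)] by simp
qed

lemma independent_card_eq_imp_spanning:
  assumes T: "T \<subseteq> K" "Q.independent T" "card T = n"
  shows "K \<subseteq> Q.span T"
proof
  fix z assume z: "z \<in> K"
  show "z \<in> Q.span T"
  proof (rule ccontr)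
    assume "z \<notin> Q.span T"
    then have "Q.independent (insert z T)" "z \<notin> T"
      using Q.independent_insertI[OF _ T(2)] Q.span_base by blast+
    moreover have "finite T" using independent_card_le[OF T(1,2)] by blast
    ultimately show False using independent_card_le[of "insert z T"] z T by simp
  qed
qed

lemma spanning_subset_contains_basis:
  assumes "P \<subseteq> K" "K \<subseteq> Q.span P"
  obtains g where "\<forall>j<n. g j \<in> P" "K \<subseteq> Q.span (g ` {..<n})"
proof -
  obtain C where C: "C \<subseteq> P" "Q.independent C" "P \<subseteq> Q.span C"
    using Q.maximal_independent_subset[of P] by blast
  have KC: "K \<subseteq> Q.span C"
    using assms(2) Q.span_minimal[OF C(3) Q.subspace_span] by blast
  have CK: "C \<subseteq> K" using C(1) assms(1) by blast
  have "finite C" "card C \<le> n" using independent_card_le[OF CK C(2)] by auto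
  moreover have "n \<le> card C" using spanning_card_ge[OF \<open>finite C\<close> KC] .
  ultimately have "finite C" "card C = n" by auto
  then obtain g where "bij_betw g {0..<n} C"
    by (metis ex_bij_betw_nat_finite)
  then have "g ` {..<n} = C" by (simp add: bij_betw_def atLeast0LessThan)
  show ?thesis by (rule that) (use \<open>g ` {..<n} = C\<close> C(1) KC in auto)
qed

lemma rat_linear_on_eq_0_of_products:
  fixes \<phi> :: "complex \<Rightarrow> rat"
  assumes \<phi>: "rat_linear_on K \<phi>"
    and x: "\<forall>i<k. x i \<in> K" "rat_independent k x"
    and Y: "Y \<subseteq> K" "Q.independent Y" and card: "n < k + card Y"
    and vanish: "\<forall>i<k. \<forall>y\<in>Y. \<phi> (x i * y) = 0" and z: "z \<in> K"
  shows "\<phi> z = 0"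
proof -
  obtain F where F: "Y \<subseteq> F" "F \<subseteq> K" "Q.independent F" "K \<subseteq> Q.span F"
    using Q.maximal_independent_subset_extend[OF Y] by blast
  have "finite F" "card F \<le> n" using independent_card_le[OF F(2,3)] by auto
  moreover have "n \<le> card F" using spanning_card_ge[OF \<open>finite F\<close> F(4)] .
  ultimately have "finite F" "card F = n" by auto
  have "finite (F - Y)" "F - Y \<subseteq> K" using \<open>finite F\<close> F(2) by auto
  moreover have "card (F - Y) < k"
    using card_Diff_subset[OF finite_subset[OF F(1) \<open>finite F\<close>] F(1)] \<open>card F = n\<close>
      card_mono[OF \<open>finite F\<close> F(1)] card by linarith
  ultimately obtain a where a: "a \<in> K" "a \<noteq> 0" "\<forall>u\<in>F - Y. \<phi> (a * u) = 0"
      "\<forall>u\<in>K. (\<forall>j<k. \<phi> (x j * u) = 0) \<longrightarrow> \<phi> (a * u) = 0"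
    using exists_mult_annihilator[OF \<phi> x] by blast
  have "\<phi> (a * u) = 0" if "u \<in> F" for u
    using a(3,4) vanish that F(2) by blast
  then show ?thesis using rat_linear_on_eq_0_of_mult[OF \<phi> a(1,2) F(2,4) _ z] by blast
qed

theorem subset_span_products:
  assumes x: "\<forall>i<k. x i \<in> K" "rat_independent k x"
    and y: "\<forall>j<l. y j \<in> K" "rat_independent l y" and "n < k + l"
  shows "K \<subseteq> Q.span {x i * y j | i j. i < k \<and> j < l}"
proof
  fix z assume z: "z \<in> K"
  let ?P = "{x i * y j | i j. i < k \<and> j < l}"
  show "z \<in> Q.span ?P"
  proof (rule ccontr)
    assume notin: "z \<notin> Q.span ?P"
    have "?P \<subseteq> K"
    proof
      fix p assume "p \<in> ?P"
      then obtain i j where "i < k" "j < l" "p = x i * y j" by blast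
      then show "p \<in> K" using x(1) y(1) by (simp add: mult_mem)
    qed
    then obtain \<phi> :: "complex \<Rightarrow> rat" where \<phi>: "rat_linear_on K \<phi>" "\<forall>s\<in>?P. \<phi> s = 0" "\<phi> z = 1"
      using separating_rat_functional[OF _ z notin] by blast
    have "\<phi> z = 0"
    proof (rule rat_linear_on_eq_0_of_products[OF \<phi>(1) x])
      show "y ` {..<l} \<subseteq> K" using y(1) by auto
      show "Q.independent (y ` {..<l})" by (rule rat_independent_imp_independent[OF y(2)])
      show "n < k + card (y ` {..<l})" using card_image_rat_independent[OF y(2)] assms(5) by simp
      show "\<forall>i<k. \<forall>v\<in>y ` {..<l}. \<phi> (x i * v) = 0" using \<phi>(2) by blast
    qed (fact z)
    then show False using \<phi>(3) by simp
  qed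
qed

lemma algebraic_of_mem:
  assumes "x \<in> K"
  shows "algebraic x"
proof -
  have "\<not> rat_independent (Suc n) (\<lambda>j. x ^ j)"
  proof
    assume ind: "rat_independent (Suc n) (\<lambda>j. x ^ j)"
    have "(\<lambda>j. x ^ j) ` {..<Suc n} \<subseteq> K" using assms by (auto intro: power_mem)
    then have "card ((\<lambda>j. x ^ j) ` {..<Suc n}) \<le> n"
      using independent_card_le rat_independent_imp_independent[OF ind] by blast
    then show False using card_image_rat_independent[OF ind] by simp
  qed
  then obtain q j0 where q: "(\<Sum>j<Suc n. of_rat (q j) * x ^ j) = 0" "j0 < Suc n" "q j0 \<noteq> 0"
    unfolding rat_independent_def by blast
  define p where "p = (\<Sum>j<Suc n. monom (of_rat (q j) :: complex) j)"
  have coeff_p: "coeff p i = (if i < Suc n then of_rat (q i) else 0)" for i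
    unfolding p_def by (simp add: coeff_sum coeff_monom)
  show ?thesis
  proof (rule algebraicI')
    show "coeff p i \<in> \<rat>" for i by (simp add: coeff_p)
    show "p \<noteq> 0" using q(2,3) coeff_p[of j0] by auto
    show "poly p x = 0" using q(1) by (simp add: p_def poly_sum poly_monom)
  qed
qed

lemma fractional_ideal_rat_basis:
  assumes I: "fractional_ideal K I"
  obtains h where "\<forall>j<n. h j \<in> I" "rat_independent n h"
proof -
  obtain b where b: "\<forall>j<n. b j \<in> K" "rat_independent n b" "K \<subseteq> Q.span (b ` {..<n})"
    by (rule rat_basis)
  have "\<forall>j\<in>{..<n}. \<exists>d::int. d \<noteq> 0 \<and> of_int d * b j \<in> ring_of_integers K"
  proof
    fix j assume "j \<in> {..<n}"
    then have bj: "b j \<in> K" using b(1) by blast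
    obtain d :: int where "d \<noteq> 0" "algebraic_int (of_int d * b j)"
      using algebraic_imp_int_multiple_algebraic_int[OF algebraic_of_mem[OF bj]] .
    then show "\<exists>d::int. d \<noteq> 0 \<and> of_int d * b j \<in> ring_of_integers K"
      using mult_mem[OF of_int_mem bj]
      unfolding ring_of_integers_def algebraic_integer_iff_algebraic_int by blast
  qed
  then obtain d :: "nat \<Rightarrow> int"
    where d: "\<forall>j\<in>{..<n}. d j \<noteq> 0 \<and> of_int (d j) * b j \<in> ring_of_integers K"
    by (rule bchoice[THEN exE])
  obtain x0 where x0: "x0 \<in> I" "x0 \<noteq> 0"
    using I unfolding fractional_ideal_def by blast
  define h where "h j = of_int (d j) * b j * x0" for j
  have "\<forall>j<n. h j \<in> I" using I d x0(1) unfolding fractional_ideal_def h_def by blast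
  moreover have "rat_independent n h"
    unfolding rat_independent_def
  proof (rule allI, rule impI)
    fix q assume "(\<Sum>j<n. of_rat (q j) * h j) = 0"
    moreover have "(\<Sum>j<n. of_rat (q j) * h j) = x0 * (\<Sum>j<n. of_rat (q j * of_int (d j)) * b j)"
      unfolding h_def by (simp add: sum_distrib_left of_rat_mult ac_simps)
    ultimately have "(\<Sum>j<n. of_rat (q j * of_int (d j)) * b j) = 0" using x0(2) by simp
    then have "\<forall>j<n. q j * of_int (d j) = 0"
      using spec[OF b(2)[unfolded rat_independent_def], of "\<lambda>j. q j * of_int (d j)"] by simp
    then show "\<forall>j<n. q j = 0" using d by auto
  qed
  ultimately show ?thesis by (rule that)
qed

end

section \<open>Minkowski minima\<close>

definition lin_indep_family ::
    "(nat \<Rightarrow> complex) set \<Rightarrow> nat \<Rightarrow> (nat \<Rightarrow> nat \<Rightarrow> complex) \<Rightarrow> bool" where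
  "lin_indep_family \<Gamma> i e \<longleftrightarrow> (\<forall>j<i. e j \<in> \<Gamma>) \<and> real_lin_indep i e"

definition family_norm ::
    "((nat \<Rightarrow> complex) \<Rightarrow> real) \<Rightarrow> nat \<Rightarrow> (nat \<Rightarrow> nat \<Rightarrow> complex) \<Rightarrow> real" where
  "family_norm N i e = Max ((\<lambda>j. N (e j)) ` {..<i})"

lemma minkowski_min_altdef:
  "minkowski_min N \<Gamma> i = Inf (family_norm N i ` Collect (lin_indep_family \<Gamma> i))"
  unfolding minkowski_min_def lin_indep_family_def family_norm_def[abs_def]
  by (rule arg_cong[where f = Inf]) auto

lemma real_lin_indep_mono:
  assumes "real_lin_indep n e" "k \<le> n"
  shows "real_lin_indep k e"
  unfolding real_lin_indep_def
proof (rule allI, rule impI)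
  fix c :: "nat \<Rightarrow> real"
  assume c: "\<forall>t. (\<Sum>j<k. of_real (c j) * e j t) = 0"
  define c' where "c' j = (if j < k then c j else 0)" for j
  have "(\<Sum>j<n. of_real (c' j) * e j t) = (\<Sum>j<k. of_real (c' j) * e j t)" for t
    by (rule sum.mono_neutral_right) (use assms(2) in \<open>auto simp: c'_def\<close>)
  also have "(\<Sum>j<k. of_real (c' j) * e j t) = (\<Sum>j<k. of_real (c j) * e j t)" for t
    by (rule sum.cong) (simp_all add: c'_def)
  finally have "\<forall>j<n. c' j = 0" using assms(1) c unfolding real_lin_indep_def by simp
  then show "\<forall>j<k. c j = 0" using assms(2) unfolding c'_def by (metis order_less_le_trans)
qed

lemma real_lin_indep_cong:
  "real_lin_indep m e \<Longrightarrow> (\<And>j. j < m \<Longrightarrow> e j = e' j) \<Longrightarrow> real_lin_indep m e'"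
  unfolding real_lin_indep_def by (metis (no_types, lifting) lessThan_iff sum.cong)

lemma family_norm_ge: "j < i \<Longrightarrow> N (e j) \<le> family_norm N i e"
  unfolding family_norm_def by (intro Max_ge) auto

lemma family_norm_image_nonneg:
  assumes "0 < i" "\<And>v. v \<in> \<Gamma> \<Longrightarrow> 0 \<le> N v"
  shows "\<forall>a\<in>family_norm N i ` Collect (lin_indep_family \<Gamma> i). 0 \<le> a"
proof
  fix a assume "a \<in> family_norm N i ` Collect (lin_indep_family \<Gamma> i)"
  then obtain e where "a = family_norm N i e" "lin_indep_family \<Gamma> i e" by blast
  moreover have "e 0 \<in> \<Gamma>"
    using \<open>lin_indep_family \<Gamma> i e\<close> assms(1) unfolding lin_indep_family_def by blast
  ultimately show "0 \<le> a" using assms(2)[of "e 0"] family_norm_ge[OF assms(1), of N e] by auto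
qed

lemma family_norm_products_le:
  assumes submult: "\<And>v w. v \<in> \<Gamma>\<^sub>1 \<Longrightarrow> w \<in> \<Gamma>\<^sub>2 \<Longrightarrow> N (\<lambda>t. v t * w t) \<le> N v * N w"
    and nonneg: "\<And>v. v \<in> \<Gamma>\<^sub>1 \<union> \<Gamma>\<^sub>2 \<Longrightarrow> 0 \<le> N v"
    and e: "\<forall>i<k. e i \<in> \<Gamma>\<^sub>1" and f: "\<forall>i<l. f i \<in> \<Gamma>\<^sub>2" and "0 < m"
    and g: "\<forall>j<m. \<exists>i<k. \<exists>i'<l. g j = (\<lambda>t. e i t * f i' t)"
  shows "family_norm N m g \<le> family_norm N k e * family_norm N l f"
proof -
  have "N (g j) \<le> family_norm N k e * family_norm N l f" if "j < m" for j
  proof -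
    obtain i i' where i: "i < k" "i' < l" and gj: "g j = (\<lambda>t. e i t * f i' t)"
      using g \<open>j < m\<close> by blast
    have "e i \<in> \<Gamma>\<^sub>1" "f i' \<in> \<Gamma>\<^sub>2" using e f i by auto
    then have "N (g j) \<le> N (e i) * N (f i')" unfolding gj by (rule submult)
    also have "\<dots> \<le> family_norm N k e * family_norm N l f"
    proof (rule mult_mono)
      show "N (e i) \<le> family_norm N k e" "N (f i') \<le> family_norm N l f"
        using family_norm_ge i by auto
      show "0 \<le> N (f i')" using nonneg \<open>f i' \<in> \<Gamma>\<^sub>2\<close> by blast
      show "0 \<le> family_norm N k e"
        using nonneg[of "e i"] \<open>e i \<in> \<Gamma>\<^sub>1\<close> family_norm_ge[OF i(1), of N e] by simp
    qed
    finally show ?thesis .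
  qed
  then show ?thesis
    unfolding family_norm_def[of N m g] using \<open>0 < m\<close> by (intro Max.boundedI) auto
qed

lemma Inf_le_mult_Inf:
  fixes A B C :: "real set"
  assumes A: "A \<noteq> {}" "\<forall>a\<in>A. 0 \<le> a" and B: "B \<noteq> {}" "\<forall>b\<in>B. 0 \<le> b" and C: "\<forall>c\<in>C. 0 \<le> c"
    and H: "\<forall>a\<in>A. \<forall>b\<in>B. \<exists>c\<in>C. c \<le> a * b"
  shows "Inf C \<le> Inf A * Inf B"
proof -
  have bdd_C: "bdd_below C" using C by (auto intro: bdd_belowI)
  have Inf_C_le: "Inf C \<le> a * b" if "a \<in> A" "b \<in> B" for a b
    using H that cInf_lower[OF _ bdd_C] by (meson order_trans)
  have Inf_C_le_Inf_A: "Inf C \<le> Inf A * b" if b: "b \<in> B" for b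
  proof (cases "b = 0")
    case True
    then show ?thesis using Inf_C_le[OF _ b] A(1) by force
  next
    case False
    then have "b > 0" using B(2) b by force
    have "Inf C / b \<le> Inf A"
      using Inf_C_le[OF _ b] \<open>b > 0\<close> by (intro cInf_greatest[OF A(1)]) (simp add: pos_divide_le_eq)
    then show ?thesis using \<open>b > 0\<close> by (simp add: pos_divide_le_eq)
  qed
  have "0 \<le> Inf A" using cInf_greatest[OF A(1)] A(2) by auto
  show ?thesis
  proof (cases "Inf A = 0")
    case True
    then show ?thesis using Inf_C_le_Inf_A B(1) by force
  next
    case False
    then have "Inf A > 0" using \<open>0 \<le> Inf A\<close> by simp
    have "Inf C / Inf A \<le> Inf B"
      using Inf_C_le_Inf_A \<open>Inf A > 0\<close>
      by (intro cInf_greatest[OF B(1)]) (simp add: pos_divide_le_eq mult.commute)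
    then show ?thesis using \<open>Inf A > 0\<close> by (simp add: pos_divide_le_eq mult.commute)
  qed
qed

theorem minkowski_min_mult_le:
  fixes N :: "(nat \<Rightarrow> complex) \<Rightarrow> real"
  assumes nonneg: "\<And>v. v \<in> \<Gamma>\<^sub>1 \<union> \<Gamma>\<^sub>2 \<union> \<Gamma>\<^sub>3 \<Longrightarrow> 0 \<le> N v"
    and submult: "\<And>v w. v \<in> \<Gamma>\<^sub>1 \<Longrightarrow> w \<in> \<Gamma>\<^sub>2 \<Longrightarrow> N (\<lambda>t. v t * w t) \<le> N v * N w"
    and pos: "0 < k" "0 < l" "0 < m"
    and ex: "\<exists>e. lin_indep_family \<Gamma>\<^sub>1 k e" "\<exists>f. lin_indep_family \<Gamma>\<^sub>2 l f"
    and products: "\<And>e f. lin_indep_family \<Gamma>\<^sub>1 k e \<Longrightarrow> lin_indep_family \<Gamma>\<^sub>2 l f \<Longrightarrow>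
      \<exists>g. lin_indep_family \<Gamma>\<^sub>3 m g \<and> (\<forall>j<m. \<exists>i<k. \<exists>i'<l. g j = (\<lambda>t. e i t * f i' t))"
  shows "minkowski_min N \<Gamma>\<^sub>3 m \<le> minkowski_min N \<Gamma>\<^sub>1 k * minkowski_min N \<Gamma>\<^sub>2 l"
proof -
  have products_le: "\<exists>g. lin_indep_family \<Gamma>\<^sub>3 m g \<and>
      family_norm N m g \<le> family_norm N k e * family_norm N l f"
    if e: "lin_indep_family \<Gamma>\<^sub>1 k e" and f: "lin_indep_family \<Gamma>\<^sub>2 l f" for e f
  proof -
    obtain g where g: "lin_indep_family \<Gamma>\<^sub>3 m g" "\<forall>j<m. \<exists>i<k. \<exists>i'<l. g j = (\<lambda>t. e i t * f i' t)"
      using products[OF e f] by blast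
    have "family_norm N m g \<le> family_norm N k e * family_norm N l f"
      by (rule family_norm_products_le[OF submult _ _ _ pos(3) g(2)])
         (use nonneg e f in \<open>auto simp: lin_indep_family_def\<close>)
    then show ?thesis using g(1) by blast
  qed
  show ?thesis
    unfolding minkowski_min_altdef
  proof (rule Inf_le_mult_Inf)
    show "family_norm N k ` Collect (lin_indep_family \<Gamma>\<^sub>1 k) \<noteq> {}"
      "family_norm N l ` Collect (lin_indep_family \<Gamma>\<^sub>2 l) \<noteq> {}"
      using ex by auto
    show "\<forall>a\<in>family_norm N k ` Collect (lin_indep_family \<Gamma>\<^sub>1 k). 0 \<le> a"
      by (rule family_norm_image_nonneg[OF pos(1)]) (use nonneg in blast)
    show "\<forall>b\<in>family_norm N l ` Collect (lin_indep_family \<Gamma>\<^sub>2 l). 0 \<le> b"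
      by (rule family_norm_image_nonneg[OF pos(2)]) (use nonneg in blast)
    show "\<forall>c\<in>family_norm N m ` Collect (lin_indep_family \<Gamma>\<^sub>3 m). 0 \<le> c"
      by (rule family_norm_image_nonneg[OF pos(3)]) (use nonneg in blast)
    show "\<forall>a\<in>family_norm N k ` Collect (lin_indep_family \<Gamma>\<^sub>1 k).
        \<forall>b\<in>family_norm N l ` Collect (lin_indep_family \<Gamma>\<^sub>2 l).
        \<exists>c\<in>family_norm N m ` Collect (lin_indep_family \<Gamma>\<^sub>3 m). c \<le> a * b"
      using products_le by fast
  qed
qed

section \<open>The canonical embedding\<close>

locale embedded_number_field = num_field K n for K :: "complex set" and n :: nat +
  fixes r1 r2 :: nat and \<sigma> :: "nat \<Rightarrow> complex \<Rightarrow> complex"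
  assumes degree_split: "n = r1 + 2 * r2"
    and embeddings: "\<forall>i<n. field_embedding K (\<sigma> i)"
    and embeddings_distinct: "\<forall>i<n. \<forall>j<n. i \<noteq> j \<longrightarrow> (\<exists>x\<in>K. \<sigma> i x \<noteq> \<sigma> j x)"
    and real_embeddings: "\<forall>i<r1. \<forall>x\<in>K. \<sigma> i x \<in> \<real>"
    and conj_embeddings: "\<forall>j. r1 \<le> j \<and> j < r1 + r2 \<longrightarrow> (\<forall>x\<in>K. \<sigma> (j + r2) x = cnj (\<sigma> j x))"
begin

abbreviation embed :: "complex \<Rightarrow> nat \<Rightarrow> complex" where
  "embed \<equiv> canon_embed \<sigma> r1 r2"

lemma embed_mem_Vspace: "x \<in> K \<Longrightarrow> embed x \<in> Vspace r1 r2"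
  using real_embeddings unfolding canon_embed_def Vspace_def by auto

lemma embed_mult:
  assumes "x \<in> K" "y \<in> K"
  shows "embed (x * y) = (\<lambda>t. embed x t * embed y t)"
proof
  fix t
  show "embed (x * y) t = embed x t * embed y t"
    using embeddings degree_split assms unfolding canon_embed_def field_embedding_def by auto
qed

lemma rat_linear_on_embedding: "i < n \<Longrightarrow> rat_linear_on K (\<sigma> i)"
  using embeddings embedding_rat_linear by blast

lemma rat_independent_of_real_lin_indep:
  assumes x: "\<forall>j<m. x j \<in> K" and ind: "real_lin_indep m (\<lambda>j. embed (x j))"
  shows "rat_independent m x"
  unfolding rat_independent_def
proof (rule allI, rule impI)
  fix q :: "nat \<Rightarrow> rat"
  assume rel: "(\<Sum>j<m. of_rat (q j) * x j) = 0"
  have "(\<Sum>j<m. of_real (of_rat (q j)) * embed (x j) t) = 0" for t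
  proof (cases "t < r1 + r2")
    case True
    then have s: "rat_linear_on K (\<sigma> t)" using degree_split by (intro rat_linear_on_embedding) simp
    have "(\<Sum>j<m. of_real (of_rat (q j)) * embed (x j) t) = (\<Sum>j<m. \<sigma> t (rat_scale (q j) (x j)))"
      using True x
      by (intro sum.cong refl) (simp add: canon_embed_def rat_linear_on_scale[OF s] of_real_of_rat)
    also have "\<dots> = \<sigma> t (\<Sum>j<m. rat_scale (q j) (x j))"
      by (rule rat_linear_on_sum[OF s, symmetric]) (use x in \<open>auto intro: rat_scale_mem\<close>)
    also have "\<dots> = 0" using rel rat_linear_on_0[OF s] by (simp add: rat_scale_def)
    finally show ?thesis .
  qed (simp add: canon_embed_def)
  then have "\<forall>j<m. (of_rat (q j) :: real) = 0"
    using spec[OF ind[unfolded real_lin_indep_def], of "\<lambda>j. of_rat (q j)"] by blast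
  then show "\<forall>j<m. q j = 0" by simp
qed

lemma lin_indep_family_embed_pullback:
  assumes "I \<subseteq> K" "lin_indep_family (embed ` I) k e"
  obtains x where "\<forall>i<k. x i \<in> I \<and> e i = embed (x i)" "rat_independent k x"
proof -
  have "\<forall>i\<in>{..<k}. \<exists>u. u \<in> I \<and> e i = embed u"
    using assms(2) unfolding lin_indep_family_def by blast
  then obtain x where x: "\<forall>i<k. x i \<in> I \<and> e i = embed (x i)"
    using bchoice[of "{..<k}"] by (metis lessThan_iff)
  moreover have "rat_independent k x"
    using x assms unfolding lin_indep_family_def
    by (intro rat_independent_of_real_lin_indep) (auto elim: real_lin_indep_cong)
  ultimately show ?thesis by (rule that)
qed

lemma embed_relation_imp_embeddings_relation:
  assumes g: "\<forall>j<m. g j \<in> K" and rel: "\<forall>t. (\<Sum>j<m. of_real (c j) * embed (g j) t) = 0"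
    and "i < n"
  shows "(\<Sum>j<m. \<sigma> i (g j) * of_real (c j)) = 0"
proof (cases "i < r1 + r2")
  case True
  then show ?thesis using rel[rule_format, of i] by (simp add: canon_embed_def mult.commute)
next
  case False
  define i' where "i' = i - r2"
  have i': "r1 \<le> i'" "i' < r1 + r2" "i = i' + r2"
    using False \<open>i < n\<close> degree_split by (auto simp: i'_def)
  have "(\<Sum>j<m. \<sigma> i (g j) * of_real (c j)) = cnj (\<Sum>j<m. of_real (c j) * embed (g j) i')"
    using i' g conj_embeddings by (simp add: canon_embed_def mult.commute)
  then show ?thesis using rel by simp
qed

lemma embeddings_rows_independent:
  assumes g: "\<forall>j<n. g j \<in> K" "K \<subseteq> Q.span (g ` {..<n})"
    and v: "\<forall>j<n. (\<Sum>i<n. v i * \<sigma> i (g j)) = 0"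
  shows "\<forall>i<n. v i = 0"
proof -
  have lin: "rat_linear_on K (\<lambda>x. \<Sum>i<n. v i * \<sigma> i x)"
    by (rule rat_linear_on_lincomb) (simp add: rat_linear_on_embedding)
  have rel_v: "(\<Sum>i<n. v i * \<sigma> i x) = 0" if "x \<in> K" for x
    by (rule rat_linear_on_eq_0_on_span[OF lin, of "g ` {..<n}"]) (use g v that in auto)
  show ?thesis
    by (intro allI impI, rule characters_linearly_independent[of "{..<n}" K \<sigma> v])
       (use embeddings embeddings_distinct rel_v in \<open>auto simp: field_embedding_def intro: mult_mem\<close>)
qed

lemma real_lin_indep_embed_rat_basis:
  assumes g: "\<forall>j<n. g j \<in> K" "K \<subseteq> Q.span (g ` {..<n})"
  shows "real_lin_indep n (\<lambda>j. embed (g j))"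
  unfolding real_lin_indep_def
proof (rule allI, rule impI)
  fix c :: "nat \<Rightarrow> real"
  assume rel: "\<forall>t. (\<Sum>j<n. of_real (c j) * embed (g j) t) = 0"
  have "\<not> (\<exists>v. (\<exists>i<n. v i \<noteq> 0) \<and> (\<forall>j<n. (\<Sum>i<n. v i * \<sigma> i (g j)) = 0))"
    using embeddings_rows_independent[OF g] by blast
  then have "\<not> (\<exists>w. (\<exists>j<n. w j \<noteq> 0) \<and> (\<forall>i<n. (\<Sum>j<n. \<sigma> i (g j) * w j) = 0))"
    unfolding square_matrix_right_kernel_iff_left_kernel[of n "\<lambda>i j. \<sigma> i (g j)"] .
  moreover have "\<forall>i<n. (\<Sum>j<n. \<sigma> i (g j) * complex_of_real (c j)) = 0"
    using embed_relation_imp_embeddings_relation[OF g(1) rel] by blast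
  ultimately have "\<not> (\<exists>j<n. complex_of_real (c j) \<noteq> 0)"
    using exI[where x = "\<lambda>j. complex_of_real (c j)"
      and P = "\<lambda>w. (\<exists>j<n. w j \<noteq> 0) \<and> (\<forall>i<n. (\<Sum>j<n. \<sigma> i (g j) * w j) = 0)"] by blast
  then show "\<forall>j<n. c j = 0" by simp
qed

lemma ex_lin_indep_family_embed_ideal:
  assumes I: "fractional_ideal K I" and "i \<le> n"
  shows "\<exists>e. lin_indep_family (embed ` I) i e"
proof -
  obtain h where h: "\<forall>j<n. h j \<in> I" "rat_independent n h" using fractional_ideal_rat_basis[OF I] .
  have hK: "\<forall>j<n. h j \<in> K" using h(1) I unfolding fractional_ideal_def by auto
  have "K \<subseteq> Q.span (h ` {..<n})"
    using hK rat_independent_imp_independent[OF h(2)] card_image_rat_independent[OF h(2)]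
    by (intro independent_card_eq_imp_spanning) auto
  then have "real_lin_indep n (\<lambda>j. embed (h j))" using hK by (intro real_lin_indep_embed_rat_basis)
  then have "real_lin_indep i (\<lambda>j. embed (h j))" using \<open>i \<le> n\<close> by (rule real_lin_indep_mono)
  then show ?thesis
    using h(1) \<open>i \<le> n\<close> unfolding lin_indep_family_def by (intro exI[of _ "\<lambda>j. embed (h j)"]) auto
qed

lemma lin_indep_family_embed_products:
  assumes IJ: "I \<subseteq> K" "J \<subseteq> K" and "n < k + l"
    and e: "lin_indep_family (embed ` I) k e" and f: "lin_indep_family (embed ` J) l f"
  shows "\<exists>g. lin_indep_family (embed ` frac_ideal_mult I J) n g \<and>
    (\<forall>j<n. \<exists>i<k. \<exists>i'<l. g j = (\<lambda>t. e i t * f i' t))"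
proof -
  obtain x where x: "\<forall>i<k. x i \<in> I \<and> e i = embed (x i)" "rat_independent k x"
    by (rule lin_indep_family_embed_pullback[OF IJ(1) e])
  obtain y where y: "\<forall>i<l. y i \<in> J \<and> f i = embed (y i)" "rat_independent l y"
    by (rule lin_indep_family_embed_pullback[OF IJ(2) f])
  have xK: "\<forall>i<k. x i \<in> K" and yK: "\<forall>i<l. y i \<in> K" using x(1) y(1) IJ by auto
  define P where "P = {x i * y i' | i i'. i < k \<and> i' < l}"
  have span: "K \<subseteq> Q.span P"
    unfolding P_def using xK x(2) yK y(2) \<open>n < k + l\<close> by (intro subset_span_products)
  have P_sub: "P \<subseteq> K"
  proof
    fix p assume "p \<in> P"
    then obtain i i' where "i < k" "i' < l" "p = x i * y i'" unfolding P_def by blast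
    then show "p \<in> K" using xK yK by (simp add: mult_mem)
  qed
  obtain g where g: "\<forall>j<n. g j \<in> P" "K \<subseteq> Q.span (g ` {..<n})"
    by (rule spanning_subset_contains_basis[OF P_sub span])
  have g_prod: "\<exists>i<k. \<exists>i'<l. g j = x i * y i'" if "j < n" for j
    using g(1) that unfolding P_def by blast
  have gK: "\<forall>j<n. g j \<in> K" using g(1) P_sub by blast
  have "embed (g j) \<in> embed ` frac_ideal_mult I J \<and>
      (\<exists>i<k. \<exists>i'<l. embed (g j) = (\<lambda>t. e i t * f i' t))" if j: "j < n" for j
  proof -
    obtain i i' where i: "i < k" "i' < l" and gj: "g j = x i * y i'" using g_prod[OF j] by blast
    have "x i \<in> I" "y i' \<in> J" "e i = embed (x i)" "f i' = embed (y i')" using x(1) y(1) i by auto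
    moreover have "embed (g j) = (\<lambda>t. embed (x i) t * embed (y i') t)"
      using gj xK yK i by (simp add: embed_mult)
    ultimately have "g j \<in> frac_ideal_mult I J" "embed (g j) = (\<lambda>t. e i t * f i' t)"
      using gj by (simp_all add: mult_mem_frac_ideal_mult)
    then show ?thesis using i by blast
  qed
  moreover have "real_lin_indep n (\<lambda>j. embed (g j))" by (rule real_lin_indep_embed_rat_basis[OF gK g(2)])
  ultimately show ?thesis
    unfolding lin_indep_family_def by (intro exI[of _ "\<lambda>j. embed (g j)"]) blast
qed

end

theorem mainTheorem4:
  fixes K :: "complex set" and n r1 r2 k l :: nat
    and \<sigma> :: "nat \<Rightarrow> complex \<Rightarrow> complex"
    and N :: "(nat \<Rightarrow> complex) \<Rightarrow> real"
    and I J :: "complex set"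
  assumes nf: "number_field K n"
    and sig_r: "n = r1 + 2 * r2"
    and emb: "\<forall>i<n. field_embedding K (\<sigma> i)"
    and distinct: "\<forall>i<n. \<forall>j<n. i \<noteq> j \<longrightarrow> (\<exists>x\<in>K. \<sigma> i x \<noteq> \<sigma> j x)"
    and real_emb: "\<forall>i<r1. \<forall>x\<in>K. \<sigma> i x \<in> \<real>"
    and conj_emb: "\<forall>j. r1 \<le> j \<and> j < r1 + r2 \<longrightarrow> (\<forall>x\<in>K. \<sigma> (j + r2) x = cnj (\<sigma> j x))"
    and norm: "is_norm_on (Vspace r1 r2) N"
    and submult: "\<forall>v\<in>Vspace r1 r2. \<forall>w\<in>Vspace r1 r2. N (\<lambda>t. v t * w t) \<le> N v * N w"
    and kl: "1 \<le> k" "k \<le> n" "1 \<le> l" "l \<le> n" "k + l \<ge> n + 1"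
    and I: "fractional_ideal K I" and J: "fractional_ideal K J"
  shows "minkowski_min N (canon_embed \<sigma> r1 r2 ` frac_ideal_mult I J) n
         \<le> minkowski_min N (canon_embed \<sigma> r1 r2 ` I) k * minkowski_min N (canon_embed \<sigma> r1 r2 ` J) l"
proof -
  interpret embedded_number_field K n r1 r2 \<sigma>
    by unfold_locales (fact nf sig_r emb distinct real_emb conj_emb)+
  have IK: "I \<subseteq> K" and JK: "J \<subseteq> K" using I J unfolding fractional_ideal_def by auto
  have in_Vspace: "embed ` I \<union> embed ` J \<union> embed ` frac_ideal_mult I J \<subseteq> Vspace r1 r2"
    using IK JK frac_ideal_mult_subset[OF IK JK] embed_mem_Vspace by blast
  show ?thesis
  proof (rule minkowski_min_mult_le)
    show "0 \<le> N v" if "v \<in> embed ` I \<union> embed ` J \<union> embed ` frac_ideal_mult I J" for v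
      using that in_Vspace norm unfolding is_norm_on_def by blast
    show "N (\<lambda>t. v t * w t) \<le> N v * N w" if "v \<in> embed ` I" "w \<in> embed ` J" for v w
      using that in_Vspace submult by blast
    show "\<exists>e. lin_indep_family (embed ` I) k e" by (rule ex_lin_indep_family_embed_ideal[OF I kl(2)])
    show "\<exists>f. lin_indep_family (embed ` J) l f" by (rule ex_lin_indep_family_embed_ideal[OF J kl(4)])
    show "\<exists>g. lin_indep_family (embed ` frac_ideal_mult I J) n g \<and>
        (\<forall>j<n. \<exists>i<k. \<exists>i'<l. g j = (\<lambda>t. e i t * f i' t))"
      if "lin_indep_family (embed ` I) k e" "lin_indep_family (embed ` J) l f" for e f
      using lin_indep_family_embed_products[OF IK JK _ that] kl(5) by simp
  qed (use kl in auto)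
qed

end
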